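(* Let $K\subseteq\mathbb{R}$ be a field that is an algebraic extension of $\mathbb{Q}$, and let $K^+=\{x\in K:x>0\}$. Then $K^+$ cannot be written as $H_1\sqcup H_2$ with $H_1,H_2$ disjoint nonempty subsets, each closed under addition and multiplication. *)

theory Defs
  imports Complex_Main "HOL-Computational_Algebra.Polynomial"
begin

definition real_subfield :: "real set \<Rightarrow> bool" where
  "real_subfield K \<longleftrightarrow> 0 \<in> K \<and> 1 \<in> K \<and>
     (\<forall>x\<in>K. \<forall>y\<in>K. x + y \<in> K \<and> x * y \<in> K) \<and>
     (\<forall>x\<in>K. - x \<in> K) \<and> (\<forall>x\<in>K. x \<noteq> 0 \<longrightarrow> inverse x \<in> K)"

definition add_mult_closed :: "real set \<Rightarrow> bool" where
  "add_mult_closed H \<longleftrightarrow> (\<forall>x\<in>H. \<forall>y\<in>H. x + y \<in> H \<and> x * y \<in> H)"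

end

theory Submission
  imports Defs
begin

text \<open>Suppose \<open>K\<^sup>+ = H\<^sub>1 \<union> H\<^sub>2\<close> with \<open>1 \<in> H\<^sub>1\<close>. Both parts are stable under multiplication by
  positive rationals, so \<open>H\<^sub>1\<close> contains every positive rational. For \<open>x \<in> H\<^sub>2\<close> and rationals
  \<open>q < x < r\<close> we get \<open>r - x \<in> H\<^sub>1\<close>, \<open>x - q \<in> H\<^sub>2\<close> and hence \<open>w = (x - q) / (r - x) \<in> H\<^sub>2\<close>.
  If \<open>x\<close> is a simple root of a rational polynomial \<open>p\<close> of degree \<open>d\<close>, then \<open>w\<close> is a root of
  the rational polynomial \<open>P(t) = (1 + t)\<^sup>d p((q + r t) / (1 + t))\<close>. Expanding \<open>p\<close> around \<open>x\<close>
  shows that all non-constant coefficients of \<open>P\<close> are positive once \<open>q\<close> and \<open>r\<close> are close to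
  \<open>x\<close> with \<open>r - x\<close> large compared to \<open>x - q\<close>. Then \<open>P(w) - P(0) = - P(0)\<close> lies in \<open>H\<^sub>2\<close>
  and is a positive rational, so it also lies in \<open>H\<^sub>1\<close>.\<close>

definition rational_coeffs :: "'a::field_char_0 poly \<Rightarrow> bool" where
  "rational_coeffs p \<longleftrightarrow> (\<forall>k. coeff p k \<in> \<rat>)"

lemma rational_coeffs_0 [simp]: "rational_coeffs 0"
  by (simp add: rational_coeffs_def)

lemma rational_coeffs_1 [simp]: "rational_coeffs 1"
  by (simp add: rational_coeffs_def)

lemma rational_coeffs_pCons: "a \<in> \<rat> \<Longrightarrow> rational_coeffs p \<Longrightarrow> rational_coeffs (pCons a p)"
  by (simp add: rational_coeffs_def coeff_pCons split: nat.split)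

lemma rational_coeffs_mult:
  "rational_coeffs p \<Longrightarrow> rational_coeffs q \<Longrightarrow> rational_coeffs (p * q)"
  by (simp add: rational_coeffs_def coeff_mult Rats_sum)

lemma rational_coeffs_power: "rational_coeffs p \<Longrightarrow> rational_coeffs (p ^ n)"
  by (induction n) (simp_all add: rational_coeffs_mult)

lemma rational_coeffs_smult: "a \<in> \<rat> \<Longrightarrow> rational_coeffs p \<Longrightarrow> rational_coeffs (smult a p)"
  by (simp add: rational_coeffs_def)

lemma rational_coeffs_sum:
  "(\<And>i. i \<in> A \<Longrightarrow> rational_coeffs (f i)) \<Longrightarrow> rational_coeffs (\<Sum>i\<in>A. f i)"
  by (simp add: rational_coeffs_def coeff_sum Rats_sum)

lemma rational_coeffs_uminus: "rational_coeffs p \<Longrightarrow> rational_coeffs (- p)"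
  by (simp add: rational_coeffs_def)

lemma rational_coeffs_pderiv: "rational_coeffs p \<Longrightarrow> rational_coeffs (pderiv p)"
  by (simp add: rational_coeffs_def coeff_pderiv)

lemma poly_eq_sum_atMost:
  fixes p :: "'a::comm_semiring_1 poly"
  assumes "degree p \<le> n"
  shows "poly p x = (\<Sum>i\<le>n. coeff p i * x ^ i)"
proof -
  have "poly p x = poly (\<Sum>i\<le>n. monom (coeff p i) i) x"
    using poly_as_sum_of_monoms'[OF assms] by simp
  then show ?thesis by (simp add: poly_sum poly_monom)
qed

lemma poly_eqI_cofinite:
  fixes p q :: "'a::{idom, ring_char_0} poly"
  assumes "finite F" and "\<And>t. t \<notin> F \<Longrightarrow> poly p t = poly q t"
  shows "p = q"
proof (rule ccontr)
  assume "p \<noteq> q"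
  then have "finite {t. poly (p - q) t = 0}" by (intro poly_roots_finite) simp
  moreover have "UNIV \<subseteq> F \<union> {t. poly (p - q) t = 0}" using assms(2) by auto
  ultimately have "finite (UNIV :: 'a set)" using assms(1) by (metis finite_Un finite_subset)
  then show False by (simp add: infinite_UNIV_char_0)
qed

definition homog_pcompose :: "nat \<Rightarrow> 'a::comm_semiring_1 poly \<Rightarrow> 'a poly \<Rightarrow> 'a poly \<Rightarrow> 'a poly" where
  "homog_pcompose d p A B = (\<Sum>i\<le>d. smult (coeff p i) (A ^ i * B ^ (d - i)))"

lemma poly_homog_pcompose:
  fixes p A B :: "'a::field poly"
  assumes "degree p \<le> d" and "poly B t \<noteq> 0"
  shows "poly (homog_pcompose d p A B) t = poly B t ^ d * poly p (poly A t / poly B t)"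
proof -
  let ?a = "poly A t" and ?b = "poly B t"
  have "poly (homog_pcompose d p A B) t = (\<Sum>i\<le>d. coeff p i * ?a ^ i * ?b ^ (d - i))"
    by (simp add: homog_pcompose_def poly_sum mult.assoc)
  also have "\<dots> = (\<Sum>i\<le>d. ?b ^ d * (coeff p i * (?a / ?b) ^ i))"
  proof (rule sum.cong)
    fix i assume "i \<in> {..d}"
    then have "?b ^ i * ?b ^ (d - i) = ?b ^ d" by (simp flip: power_add)
    then show "coeff p i * ?a ^ i * ?b ^ (d - i) = ?b ^ d * (coeff p i * (?a / ?b) ^ i)"
      using assms(2) by (simp add: field_simps)
  qed simp
  also have "\<dots> = ?b ^ d * poly p (?a / ?b)"
    by (simp add: poly_eq_sum_atMost[OF assms(1)] sum_distrib_left)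
  finally show ?thesis .
qed

lemma homog_pcompose_shift:
  fixes p A B :: "'a::field_char_0 poly"
  assumes "degree p \<le> d" and "B \<noteq> 0"
  shows "homog_pcompose d p (A + smult c B) B = homog_pcompose d (p \<circ>\<^sub>p [:c, 1:]) A B"
proof (rule poly_eqI_cofinite)
  show "finite {t. poly B t = 0}" using assms(2) by (rule poly_roots_finite)
  fix t assume "t \<notin> {t. poly B t = 0}"
  moreover have "degree (p \<circ>\<^sub>p [:c, 1:]) \<le> d" using assms(1) by (simp add: degree_pcompose)
  ultimately show "poly (homog_pcompose d p (A + smult c B) B) t =
      poly (homog_pcompose d (p \<circ>\<^sub>p [:c, 1:]) A B) t"
    using assms(1) by (simp add: poly_homog_pcompose poly_pcompose add_divide_distrib add.commute)
qed

lemma degree_homog_pcompose_le: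
  assumes "degree A \<le> 1" and "degree B \<le> 1"
  shows "degree (homog_pcompose d p A B) \<le> d"
  unfolding homog_pcompose_def
proof (intro degree_sum_le)
  fix i assume "i \<in> {..d}"
  have "degree (A ^ i * B ^ (d - i)) \<le> i * degree A + (d - i) * degree B"
    by (intro order.trans[OF degree_mult_le] add_mono) (metis degree_power_le mult.commute)+
  also have "\<dots> \<le> i * 1 + (d - i) * 1" using assms by (intro add_mono mult_le_mono2)
  also have "\<dots> = d" using \<open>i \<in> {..d}\<close> by simp
  finally show "degree (smult (coeff p i) (A ^ i * B ^ (d - i))) \<le> d"
    by (meson degree_smult_le order.trans)
qed simp

lemma rational_coeffs_homog_pcompose:
  "rational_coeffs p \<Longrightarrow> rational_coeffs A \<Longrightarrow> rational_coeffs B \<Longrightarrow>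
    rational_coeffs (homog_pcompose d p A B)"
  unfolding homog_pcompose_def
  by (intro rational_coeffs_sum rational_coeffs_smult rational_coeffs_mult rational_coeffs_power)
    (simp_all add: rational_coeffs_def)

definition coeffs_dominated :: "'a::linordered_idom poly \<Rightarrow> 'a poly \<Rightarrow> bool" where
  "coeffs_dominated p P \<longleftrightarrow> (\<forall>k. \<bar>coeff p k\<bar> \<le> coeff P k)"

lemma coeffs_dominated_0: "coeffs_dominated 0 0"
  by (simp add: coeffs_dominated_def)

lemma coeffs_dominated_pCons:
  "\<bar>a\<bar> \<le> b \<Longrightarrow> coeffs_dominated p P \<Longrightarrow> coeffs_dominated (pCons a p) (pCons b P)"
  by (simp add: coeffs_dominated_def coeff_pCons split: nat.split)

lemma coeffs_dominated_1: "coeffs_dominated 1 1"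
  by (simp add: coeffs_dominated_def)

lemma coeffs_dominated_mult:
  assumes "coeffs_dominated p P" and "coeffs_dominated q Q"
  shows "coeffs_dominated (p * q) (P * Q)"
  unfolding coeffs_dominated_def
proof
  fix k
  have "\<bar>coeff (p * q) k\<bar> \<le> (\<Sum>j\<le>k. \<bar>coeff p j\<bar> * \<bar>coeff q (k - j)\<bar>)"
    unfolding coeff_mult abs_mult[symmetric] by (rule sum_abs)
  also have "\<dots> \<le> (\<Sum>j\<le>k. coeff P j * coeff Q (k - j))"
    using assms unfolding coeffs_dominated_def
    by (intro sum_mono mult_mono) (auto intro: order.trans[OF abs_ge_zero])
  also have "\<dots> = coeff (P * Q) k" by (simp add: coeff_mult)
  finally show "\<bar>coeff (p * q) k\<bar> \<le> coeff (P * Q) k" .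
qed

lemma coeffs_dominated_power: "coeffs_dominated p P \<Longrightarrow> coeffs_dominated (p ^ n) (P ^ n)"
  by (induction n) (simp_all add: coeffs_dominated_1 coeffs_dominated_mult)

lemma abs_coeff_le_poly_1:
  assumes "coeffs_dominated p P"
  shows "\<bar>coeff p k\<bar> \<le> poly P 1"
proof -
  have nonneg: "0 \<le> coeff P j" for j
    using assms unfolding coeffs_dominated_def by (meson abs_ge_zero order.trans)
  have "\<bar>coeff p k\<bar> \<le> coeff P k" using assms by (simp add: coeffs_dominated_def)
  also have "\<dots> \<le> (\<Sum>i\<le>max k (degree P). coeff P i)"
    using nonneg by (intro member_le_sum) auto
  also have "\<dots> = poly P 1" using poly_eq_sum_atMost[of P "max k (degree P)" 1] by simp
  finally show ?thesis .
qed

lemma abs_coeff_linear_power_mult_le: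
  fixes \<alpha> \<beta> :: "'a::linordered_idom"
  assumes "0 \<le> \<alpha>" and "0 \<le> \<beta>"
  shows "\<bar>coeff ([:-\<alpha>, \<beta>:] ^ i * [:1, 1:] ^ m) k\<bar> \<le> (\<alpha> + \<beta>) ^ i * 2 ^ m"
proof -
  have "coeffs_dominated [:-\<alpha>, \<beta>:] [:\<alpha>, \<beta>:]" and "coeffs_dominated [:1, 1:] [:1, 1:]"
    using assms by (simp_all add: coeffs_dominated_pCons coeffs_dominated_0)
  then have "coeffs_dominated ([:-\<alpha>, \<beta>:] ^ i * [:1, 1:] ^ m) ([:\<alpha>, \<beta>:] ^ i * [:1, 1:] ^ m)"
    by (intro coeffs_dominated_mult coeffs_dominated_power)
  from abs_coeff_le_poly_1[OF this] show ?thesis by simp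
qed

lemma coeff_binomial_power: "coeff ([:1, 1:] ^ n) k = (of_nat (n choose k) :: 'a::comm_semiring_1)"
proof (cases "k \<le> n")
  case True
  then show ?thesis by (simp add: coeff_linear_poly_power)
next
  case False
  moreover have "degree ([:1, 1:] ^ n :: 'a poly) \<le> n"
    using degree_power_le[of "[:1, 1:] :: 'a poly" n] by simp
  ultimately show ?thesis by (simp add: coeff_eq_0 binomial_eq_0)
qed

lemma coeff_linear_mult_binomial_power_ge:
  fixes \<alpha> \<beta> :: "'a::linordered_idom"
  assumes "0 \<le> \<alpha>" and "0 \<le> \<beta>" and "1 \<le> k" and "k \<le> Suc n"
  shows "\<beta> - 2 ^ n * \<alpha> \<le> coeff ([:-\<alpha>, \<beta>:] * [:1, 1:] ^ n) k"
proof -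
  obtain j where k: "k = Suc j" using assms(3) by (cases k) auto
  have "coeff ([:-\<alpha>, \<beta>:] * [:1, 1:] ^ n) k = \<beta> * of_nat (n choose j) - \<alpha> * of_nat (n choose k)"
    by (simp add: k coeff_binomial_power)
  moreover have "\<beta> \<le> \<beta> * of_nat (n choose j)"
    using assms(2,4) mult_left_mono[of 1 "of_nat (n choose j)" \<beta>] by (simp add: k Suc_le_eq)
  moreover have "\<alpha> * of_nat (n choose k) \<le> 2 ^ n * \<alpha>"
    using assms(1) binomial_le_pow2[of n k] mult_left_mono[of "of_nat (n choose k)" "2 ^ n" \<alpha>]
    by (simp add: mult.commute)
  ultimately show ?thesis by linarith
qed

lemma coeff_homog_pcompose_pos:
  fixes T :: "'a::linordered_field poly" and \<alpha> \<beta> :: 'a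
  assumes T0: "coeff T 0 = 0" and T1: "coeff T 1 > 0"
    and \<alpha>: "0 < \<alpha>" and \<beta>: "(2 ^ d + 1) * \<alpha> < \<beta>" and small: "\<alpha> + \<beta> \<le> 1"
    and quadratic: "(\<Sum>i\<le>d. \<bar>coeff T i\<bar>) * 2 ^ d * (\<alpha> + \<beta>) ^ 2 < coeff T 1 * \<alpha>"
    and k: "1 \<le> k" "k \<le> d"
  shows "coeff (homog_pcompose d T [:-\<alpha>, \<beta>:] [:1, 1:]) k > 0"
proof -
  let ?A = "[:-\<alpha>, \<beta>:]" and ?B = "[:1, 1:] :: 'a poly"
  \<comment> \<open>The linear Taylor term contributes more than \<open>coeff T 1 * \<alpha>\<close> to the coefficient,
    the terms of order \<open>\<ge> 2\<close> only \<open>O((\<alpha> + \<beta>)\<^sup>2)\<close>.\<close>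
  have "0 < (2 ^ d + 1) * \<alpha>" using \<alpha> by (intro mult_pos_pos add_pos_pos) simp_all
  with \<beta> have \<beta>_pos: "0 < \<beta>" by linarith
  define R where "R = (\<Sum>i\<in>{2..d}. coeff T i * coeff (?A ^ i * ?B ^ (d - i)) k)"
  have "{..d} = insert 0 (insert 1 {2..d})" using k by auto
  then have split: "coeff (homog_pcompose d T ?A ?B) k = coeff T 1 * coeff (?A * ?B ^ (d - 1)) k + R"
    by (simp add: homog_pcompose_def coeff_sum R_def T0)
  have "\<beta> - 2 ^ (d - 1) * \<alpha> \<le> coeff (?A * ?B ^ (d - 1)) k"
    using \<alpha> \<beta>_pos k by (intro coeff_linear_mult_binomial_power_ge) auto
  moreover have "2 ^ (d - 1) * \<alpha> \<le> 2 ^ d * \<alpha>" using \<alpha> by (intro mult_right_mono power_increasing) auto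
  ultimately have "\<alpha> < coeff (?A * ?B ^ (d - 1)) k" using \<beta> by (simp add: algebra_simps)
  then have linear_term: "coeff T 1 * \<alpha> < coeff T 1 * coeff (?A * ?B ^ (d - 1)) k"
    using T1 by simp
  have "\<bar>R\<bar> \<le> (\<Sum>i\<in>{2..d}. \<bar>coeff T i\<bar> * ((\<alpha> + \<beta>) ^ 2 * 2 ^ d))"
    unfolding R_def
  proof (intro order.trans[OF sum_abs] sum_mono)
    fix i assume i: "i \<in> {2..d}"
    have "\<bar>coeff (?A ^ i * ?B ^ (d - i)) k\<bar> \<le> (\<alpha> + \<beta>) ^ i * 2 ^ (d - i)"
      using \<alpha> \<beta>_pos by (intro abs_coeff_linear_power_mult_le) auto
    also have "\<dots> \<le> (\<alpha> + \<beta>) ^ 2 * 2 ^ d"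
      using i \<alpha> \<beta>_pos small by (intro mult_mono power_decreasing power_increasing) auto
    finally show "\<bar>coeff T i * coeff (?A ^ i * ?B ^ (d - i)) k\<bar> \<le> \<bar>coeff T i\<bar> * ((\<alpha> + \<beta>) ^ 2 * 2 ^ d)"
      unfolding abs_mult by (intro mult_left_mono) auto
  qed
  also have "\<dots> \<le> (\<Sum>i\<le>d. \<bar>coeff T i\<bar>) * 2 ^ d * (\<alpha> + \<beta>) ^ 2"
    by (simp add: sum_distrib_right[symmetric] mult_ac) (intro mult_left_mono sum_mono2; auto)
  finally have "\<bar>R\<bar> < coeff T 1 * \<alpha>" using quadratic by simp
  then show ?thesis using split linear_term by linarith
qed

lemma coeff_0_pcompose_shift: "coeff (p \<circ>\<^sub>p [:c, 1:]) 0 = poly p c"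
  by (simp flip: poly_0_coeff_0 add: poly_pcompose)

lemma coeff_1_pcompose_shift:
  fixes p :: "'a::idom poly"
  shows "coeff (p \<circ>\<^sub>p [:c, 1:]) 1 = poly (pderiv p) c"
proof -
  have "coeff (p \<circ>\<^sub>p [:c, 1:]) 1 = coeff (pderiv (p \<circ>\<^sub>p [:c, 1:])) 0"
    by (simp add: coeff_pderiv)
  also have "\<dots> = coeff (pderiv p \<circ>\<^sub>p [:c, 1:]) 0"
    by (simp add: pderiv_pcompose pderiv_pCons)
  finally show ?thesis by (simp add: coeff_0_pcompose_shift)
qed

lemma algebraic_imp_simple_root:
  fixes x :: "'a::field_char_0"
  assumes "algebraic x"
  obtains p where "rational_coeffs p" "poly p x = 0" "poly (pderiv p) x \<noteq> 0"
proof -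
  define P where "P p \<longleftrightarrow> rational_coeffs p \<and> p \<noteq> 0 \<and> poly p x = 0" for p :: "'a poly"
  obtain p0 where "P p0"
    using assms by (auto simp: algebraic_altdef P_def rational_coeffs_def)
  then obtain p where p: "P p" and minimal: "\<And>p'. P p' \<Longrightarrow> degree p \<le> degree p'"
    using ex_has_least_nat[of P p0 degree] by blast
  have "degree p \<noteq> 0"
  proof
    assume "degree p = 0"
    then have "poly p x = lead_coeff p" by (simp add: poly_altdef)
    with p show False by (simp add: P_def)
  qed
  then have "pderiv p \<noteq> 0" and "degree (pderiv p) < degree p"
    by (simp_all add: pderiv_eq_0_iff degree_pderiv)
  then have "\<not> P (pderiv p)" using minimal by fastforce
  with p \<open>pderiv p \<noteq> 0\<close> show ?thesis
    by (intro that[of p]) (auto simp: P_def rational_coeffs_pderiv)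
qed

lemma rational_bracket:
  fixes x N C :: real
  assumes "0 < x" and "0 \<le> N" and "0 \<le> C"
  obtains q r where "q \<in> \<rat>" "r \<in> \<rat>" "0 < q" "q < x" "N * (x - q) < r - x"
    "r - q \<le> 1" "C * (r - q) ^ 2 < x - q"
proof -
  define M where "M = N + 2"
  define \<delta> where "\<delta> = min x (1 / (M * (C * M + 1)))"
  have M: "0 < M" "0 \<le> C * M" using assms by (simp_all add: M_def)
  then have "0 < \<delta>" using assms(1) by (simp add: \<delta>_def add_nonneg_pos)
  then obtain q where q: "q \<in> \<rat>" "x - \<delta> < q" "q < x"
    using Rats_dense_in_real[of "x - \<delta>" x] by auto
  define \<alpha> where "\<alpha> = x - q"
  have \<alpha>: "0 < \<alpha>" "\<alpha> < \<delta>" using q by (simp_all add: \<alpha>_def)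
  obtain r where r: "r \<in> \<rat>" "x + N * \<alpha> < r" "r < x + (N + 1) * \<alpha>"
    using Rats_dense_in_real[of "x + N * \<alpha>" "x + (N + 1) * \<alpha>"] \<alpha> by (auto simp: algebra_simps)
  have "0 \<le> N * \<alpha>" using assms(2) \<alpha> by simp
  with r have "x < r" by linarith
  have rq: "0 < r - q" "r - q < M * \<alpha>"
    using r \<open>x < r\<close> q by (simp_all add: \<alpha>_def M_def algebra_simps)
  have "0 < M * (C * M + 1)" using M by simp
  moreover have "\<alpha> < 1 / (M * (C * M + 1))" using \<alpha> by (simp add: \<delta>_def)
  ultimately have M\<alpha>: "M * \<alpha> * (C * M + 1) < 1" by (simp add: field_simps)
  have "0 < M * \<alpha>" using M \<alpha> by simp
  moreover have "0 \<le> C * M * (M * \<alpha>)" using M \<open>0 < M * \<alpha>\<close> by simp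
  ultimately have M\<alpha>_le: "M * \<alpha> \<le> 1" and CM\<alpha>: "C * M * (M * \<alpha>) < 1"
    using M\<alpha> by (simp_all add: algebra_simps)
  have "C * (r - q) ^ 2 \<le> C * (M * \<alpha>) ^ 2"
    using rq assms(3) by (intro mult_left_mono power_mono) auto
  also have "\<dots> = \<alpha> * (C * M * (M * \<alpha>))" by (simp add: power2_eq_square)
  also have "\<dots> < \<alpha>" using CM\<alpha> \<alpha> by simp
  finally show ?thesis
    using q r rq M\<alpha>_le \<alpha> assms(1) \<delta>_def
    by (intro that[of q r]) (auto simp: \<alpha>_def)
qed

lemma homog_pcompose_moebius_root:
  fixes p :: "'a::linordered_field poly"
  assumes "degree p \<le> d" and "poly p x = 0" and "q < x" and "x < r"
  shows "poly (homog_pcompose d p [:q, r:] [:1, 1:]) ((x - q) / (r - x)) = 0"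
proof -
  let ?w = "(x - q) / (r - x)"
  define c where "c = (r - q) / (r - x)"
  have c: "0 < c" using assms(3,4) by (simp add: c_def)
  have denom: "poly [:1, 1:] ?w = c" and numer: "poly [:q, r:] ?w = x * c"
    using assms(4) by (simp_all add: c_def field_simps)
  have "poly [:1, 1:] ?w \<noteq> 0" unfolding denom using c by simp
  then have "poly (homog_pcompose d p [:q, r:] [:1, 1:]) ?w =
      poly [:1, 1:] ?w ^ d * poly p (poly [:q, r:] ?w / poly [:1, 1:] ?w)"
    by (rule poly_homog_pcompose[OF assms(1)])
  also have "poly [:q, r:] ?w / poly [:1, 1:] ?w = x" unfolding denom numer using c by simp
  finally show ?thesis using assms(2) by simp
qed

lemma coeff_homog_pcompose_moebius_pos:
  fixes p :: "'a::linordered_field poly" and x :: 'a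
  defines "T \<equiv> p \<circ>\<^sub>p [:x, 1:]"
  assumes "degree p \<le> d" and "poly p x = 0" and "poly (pderiv p) x > 0"
    and "q < x" and "(2 ^ d + 1) * (x - q) < r - x" and "r - q \<le> 1"
    and "(\<Sum>i\<le>d. \<bar>coeff T i\<bar>) * 2 ^ d * (r - q) ^ 2 < poly (pderiv p) x * (x - q)"
    and "1 \<le> k" and "k \<le> d"
  shows "0 < coeff (homog_pcompose d p [:q, r:] [:1, 1:]) k"
proof -
  have shifted: "[:q, r:] = [:-(x - q), r - x:] + smult x [:1, 1:]" by simp
  have "homog_pcompose d p [:q, r:] [:1, 1:] = homog_pcompose d T [:-(x - q), r - x:] [:1, 1:]"
    unfolding shifted T_def using assms(2) by (rule homog_pcompose_shift) simp
  moreover have "coeff T 0 = 0" "coeff T 1 = poly (pderiv p) x"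
    using assms(3) by (simp_all only: T_def coeff_0_pcompose_shift coeff_1_pcompose_shift)
  moreover have "0 < coeff (homog_pcompose d T [:-(x - q), r - x:] [:1, 1:]) k"
    by (rule coeff_homog_pcompose_pos) (use assms(4-) calculation(2,3) in simp_all)
  ultimately show ?thesis by simp
qed

lemma algebraic_moebius_root_positive_coeffs:
  fixes x :: real
  assumes "algebraic x" and "0 < x"
  obtains q r P where "q \<in> \<rat>" "r \<in> \<rat>" "0 < q" "q < x" "x < r"
    "rational_coeffs P" "0 < degree P" "\<forall>k\<in>{1..degree P}. 0 < coeff P k"
    "poly P ((x - q) / (r - x)) = 0"
proof -
  obtain p where p: "rational_coeffs p" "poly p x = 0" "poly (pderiv p) x > 0"
  proof -
    obtain p where "rational_coeffs p" "poly p x = 0" "poly (pderiv p) x \<noteq> 0"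
      using assms(1) by (rule algebraic_imp_simple_root)
    then show ?thesis
      by (cases "poly (pderiv p) x > 0")
        (auto intro: that[of p] that[of "- p"] rational_coeffs_uminus simp: pderiv_minus)
  qed
  define d where "d = degree p"
  define S where "S = (\<Sum>i\<le>d. \<bar>coeff (p \<circ>\<^sub>p [:x, 1:]) i\<bar>)"
  have "pderiv p \<noteq> 0" using p(3) by auto
  then have "0 < d" by (simp add: d_def pderiv_eq_0_iff)
  have "0 \<le> S * 2 ^ d / poly (pderiv p) x" using p(3) by (simp add: S_def sum_nonneg)
  then obtain q r where qr: "q \<in> \<rat>" "r \<in> \<rat>" "0 < q" "q < x"
    "(2 ^ d + 1) * (x - q) < r - x" "r - q \<le> 1"
    "S * 2 ^ d / poly (pderiv p) x * (r - q) ^ 2 < x - q"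
    using rational_bracket[of x "2 ^ d + 1" "S * 2 ^ d / poly (pderiv p) x"] assms(2) by auto
  have "0 < (2 ^ d + 1) * (x - q)" using qr(4) by (intro mult_pos_pos add_pos_pos) simp_all
  with qr(5) have "x < r" by linarith
  define P where "P = homog_pcompose d p [:q, r:] [:1, 1:]"
  have pos: "\<forall>k\<in>{1..d}. 0 < coeff P k"
    using p qr(4-7) unfolding P_def S_def d_def
    by (auto intro!: coeff_homog_pcompose_moebius_pos simp: field_simps)
  have "degree P \<le> d" by (simp add: P_def degree_homog_pcompose_le)
  moreover have "coeff P d \<noteq> 0" using bspec[OF pos, of d] \<open>0 < d\<close> by simp
  ultimately have "degree P = d" by (simp add: le_antisym le_degree)
  moreover have "rational_coeffs P"
    unfolding P_def using p(1) qr(1,2)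
    by (intro rational_coeffs_homog_pcompose rational_coeffs_pCons) simp_all
  moreover have "poly P ((x - q) / (r - x)) = 0"
    unfolding P_def d_def using p(2) qr(4) \<open>x < r\<close> by (intro homog_pcompose_moebius_root) simp_all
  ultimately show ?thesis
    using qr(1-4) pos \<open>0 < d\<close> \<open>x < r\<close> by (intro that[of q r P]) auto
qed

lemma real_subfield_diff: "real_subfield K \<Longrightarrow> a \<in> K \<Longrightarrow> b \<in> K \<Longrightarrow> a - b \<in> K"
  unfolding real_subfield_def by (metis diff_conv_add_uminus)

lemma real_subfield_divide: "real_subfield K \<Longrightarrow> a \<in> K \<Longrightarrow> b \<in> K \<Longrightarrow> a / b \<in> K"
  unfolding real_subfield_def by (metis divide_inverse div_by_0)

lemma of_nat_mem_real_subfield: "real_subfield K \<Longrightarrow> of_nat n \<in> K"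
  by (induction n) (simp_all add: real_subfield_def)

lemma Rats_subset_real_subfield:
  assumes "real_subfield K"
  shows "\<rat> \<subseteq> K"
proof
  fix \<rho> :: real assume "\<rho> \<in> \<rat>"
  then obtain m n :: nat where "\<bar>\<rho>\<bar> = real m / real n" by (rule Rats_abs_nat_div_natE)
  then have "\<bar>\<rho>\<bar> \<in> K"
    using assms by (simp add: real_subfield_divide of_nat_mem_real_subfield)
  moreover have "\<rho> = \<bar>\<rho>\<bar> \<or> \<rho> = - \<bar>\<rho>\<bar>" by linarith
  ultimately show "\<rho> \<in> K" using assms unfolding real_subfield_def by auto
qed

locale positive_cone_partition =
  fixes K H1 H2 :: "real set"
  assumes subfield: "real_subfield K"
    and disjoint: "H1 \<inter> H2 = {}"
    and partition: "H1 \<union> H2 = {x \<in> K. 0 < x}"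
    and closed1: "add_mult_closed H1"
    and closed2: "add_mult_closed H2"

sublocale positive_cone_partition \<subseteq> swap: positive_cone_partition K H2 H1
  using subfield disjoint partition closed1 closed2 by unfold_locales auto

lemma (in positive_cone_partition) mem_H1_or_H2_iff: "y \<in> H1 \<or> y \<in> H2 \<longleftrightarrow> y \<in> K \<and> 0 < y"
  using partition by auto

lemma (in positive_cone_partition) H1_add: "a \<in> H1 \<Longrightarrow> b \<in> H1 \<Longrightarrow> a + b \<in> H1"
  using closed1 by (simp add: add_mult_closed_def)

lemma (in positive_cone_partition) H1_mult: "a \<in> H1 \<Longrightarrow> b \<in> H1 \<Longrightarrow> a * b \<in> H1"
  using closed1 by (simp add: add_mult_closed_def)

lemma (in positive_cone_partition) H1_sum:
  "finite A \<Longrightarrow> A \<noteq> {} \<Longrightarrow> (\<And>i. i \<in> A \<Longrightarrow> f i \<in> H1) \<Longrightarrow> (\<Sum>i\<in>A. f i) \<in> H1"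
  by (induction A rule: finite_ne_induct) (simp_all add: H1_add)

lemma (in positive_cone_partition) H1_power:
  assumes "w \<in> H1" and "0 < n"
  shows "w ^ n \<in> H1"
  using assms(2) by (induction n rule: nat_induct_non_zero) (simp_all add: assms(1) H1_mult)

lemma (in positive_cone_partition) H1_of_nat_mult: "z \<in> H1 \<Longrightarrow> 0 < n \<Longrightarrow> of_nat n * z \<in> H1"
  using H1_sum[of "{..<n}" "\<lambda>_. z"] by auto

lemma (in positive_cone_partition) H1_rat_mult:
  assumes "z \<in> H1" and "\<rho> \<in> \<rat>" and "0 < \<rho>"
  shows "\<rho> * z \<in> H1"
proof (rule ccontr)
  assume "\<rho> * z \<notin> H1"
  obtain m n :: nat where "n \<noteq> 0" and \<rho>: "\<rho> = real m / real n"
    using assms(2,3) Rats_abs_nat_div_natE[of \<rho>] by (metis abs_of_pos)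
  with assms(3) have "0 < m" by (simp add: zero_less_divide_iff)
  have "z \<in> K" "0 < z" using assms(1) mem_H1_or_H2_iff by blast+
  then have "\<rho> * z \<in> K" "0 < \<rho> * z"
    using assms(2,3) Rats_subset_real_subfield[OF subfield] subfield
    by (auto simp: real_subfield_def)
  with \<open>\<rho> * z \<notin> H1\<close> have "\<rho> * z \<in> H2" using mem_H1_or_H2_iff by blast
  then have "of_nat n * (\<rho> * z) \<in> H2" using \<open>n \<noteq> 0\<close> by (simp add: swap.H1_of_nat_mult)
  moreover have "of_nat n * (\<rho> * z) = of_nat m * z" using \<open>n \<noteq> 0\<close> by (simp add: \<rho>)
  moreover have "of_nat m * z \<in> H1" using assms(1) \<open>0 < m\<close> by (rule H1_of_nat_mult)
  ultimately show False using disjoint by auto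
qed

lemma (in positive_cone_partition) H1_diff: "u \<in> H2 \<Longrightarrow> v \<in> H1 \<Longrightarrow> u < v \<Longrightarrow> v - u \<in> H1"
  using mem_H1_or_H2_iff[of u] mem_H1_or_H2_iff[of v] mem_H1_or_H2_iff[of "v - u"]
    real_subfield_diff[OF subfield, of v u] swap.H1_add[of u "v - u"] disjoint
  by auto

lemma (in positive_cone_partition) H2_divide_H1: "a \<in> H1 \<Longrightarrow> b \<in> H2 \<Longrightarrow> b / a \<in> H2"
  using mem_H1_or_H2_iff[of a] mem_H1_or_H2_iff[of b] mem_H1_or_H2_iff[of "b / a"]
    real_subfield_divide[OF subfield, of b a] H1_mult[of a "b / a"] disjoint
  by auto

lemma (in positive_cone_partition) no_root_with_positive_coeffs:
  assumes "1 \<in> H1" and "w \<in> H2" and "rational_coeffs P" and "0 < degree P"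
    and pos: "\<forall>k\<in>{1..degree P}. 0 < coeff P k"
  shows "poly P w \<noteq> 0"
proof
  assume root: "poly P w = 0"
  let ?tail = "\<Sum>k\<in>{1..degree P}. coeff P k * w ^ k"
  have "?tail \<in> H2"
    using assms(2,3,4) pos
    by (intro swap.H1_sum swap.H1_rat_mult swap.H1_power) (auto simp: rational_coeffs_def)
  have "{..degree P} = insert 0 {1..degree P}" by auto
  then have "poly P w = coeff P 0 + ?tail" by (simp add: poly_altdef)
  with root have tail: "?tail = - coeff P 0" by simp
  with \<open>?tail \<in> H2\<close> have "0 < - coeff P 0" using mem_H1_or_H2_iff[of ?tail] by simp
  moreover have "- coeff P 0 \<in> \<rat>" using assms(3) by (simp add: rational_coeffs_def)
  ultimately have "?tail \<in> H1" using H1_rat_mult[OF assms(1)] tail by simp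
  with \<open>?tail \<in> H2\<close> show False using disjoint by blast
qed

lemma (in positive_cone_partition) H2_empty_if_one_in_H1:
  assumes algebraic: "\<forall>x\<in>K. algebraic x" and "1 \<in> H1"
  shows "H2 = {}"
proof (rule ccontr)
  assume "H2 \<noteq> {}"
  then obtain x where x: "x \<in> H2" by blast
  then have "x \<in> K" "0 < x" using mem_H1_or_H2_iff by blast+
  then obtain q r P where qr: "q \<in> \<rat>" "r \<in> \<rat>" "0 < q" "q < x" "x < r"
    and P: "rational_coeffs P" "0 < degree P" "\<forall>k\<in>{1..degree P}. 0 < coeff P k"
    and root: "poly P ((x - q) / (r - x)) = 0"
    using algebraic algebraic_moebius_root_positive_coeffs by metis
  have "q \<in> H1" "r \<in> H1" using H1_rat_mult[OF \<open>1 \<in> H1\<close>] qr by auto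
  then have "(x - q) / (r - x) \<in> H2"
    using x qr by (intro H2_divide_H1 H1_diff swap.H1_diff)
  with root show False using no_root_with_positive_coeffs[OF \<open>1 \<in> H1\<close> _ P] by blast
qed

theorem corollary6p2:
  fixes K :: "real set"
  assumes "real_subfield K"
    and "\<forall>x\<in>K. algebraic x"
  shows "\<not> (\<exists>H1 H2. H1 \<noteq> {} \<and> H2 \<noteq> {} \<and> H1 \<inter> H2 = {} \<and>
             H1 \<union> H2 = {x\<in>K. x > 0} \<and>
             add_mult_closed H1 \<and> add_mult_closed H2)"
proof
  assume "\<exists>H1 H2. H1 \<noteq> {} \<and> H2 \<noteq> {} \<and> H1 \<inter> H2 = {} \<and>
             H1 \<union> H2 = {x\<in>K. x > 0} \<and> add_mult_closed H1 \<and> add_mult_closed H2"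
  then obtain H1 H2 where nonempty: "H1 \<noteq> {}" "H2 \<noteq> {}"
    and partition: "positive_cone_partition K H1 H2"
    using assms(1) by (auto simp: positive_cone_partition_def)
  interpret positive_cone_partition K H1 H2 by (fact partition)
  have "1 \<in> H1 \<or> 1 \<in> H2"
    using assms(1) mem_H1_or_H2_iff by (simp add: real_subfield_def)
  then show False
    using H2_empty_if_one_in_H1 swap.H2_empty_if_one_in_H1 assms(2) nonempty by blast
qed

end
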